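(* Let $\sigma$ be a strongly erasing $k$-block substitution with $w_\epsilon\ne1^k$ that satisfies the optimality condition. Then for every $w\in\{0,1\}^*$ there is $h\in\mathbb N$ such that $f_\sigma^h([w])=\mathbb I$. Consequently $f_\sigma$ is topologically mixing: for all nonempty open sets $A,B\subseteq\mathbb I$ there is $N$ such that $f_\sigma^n(A)\cap B\ne\emptyset$ for all $n\ge N$.
   Context: Notation: $\mathbb I=[0,1]$. $\{0,1\}^*$ and $\{0,1\}^\omega$ denote finite and infinite binary words, and $\epsilon$ is the empty word. For a word $w$, set $0.w=\sum_iw_i2^{-i}$. For $x\in(0,1]$, $\widetilde x$ is the unique infinite binary expansion of $x$ not ending in $0^\infty$. For $w\in\{0,1\}^*$, the cylinder is $[w]=\{x\in\mathbb I:x=0.wv\text{ for some finite or infinite word }v\}$. Fix $k\ge2$. An erasing $k$-block substitution is a map $\sigma:\{0,1\}^k\to\{0,1\}^*$ with exactly one block $w_\epsilon$ such that $\sigma(w_\epsilon)=\epsilon$. It acts blockwise on infinite words and on finite words of length a multiple of $k$. $k$-rounding: a $k$-rounding of $w$ is any word $wv$ whose length is the least multiple of $k$ that is $\ge|w|$; if $|w|$ is a multiple of $k$, the only $k$-rounding of $w$ is $w$. $\sigma$ is strongly erasing if for every $w\in\{0,1\}^*$ there exist $n\in\mathbb N$ and words $r_0,\dots,r_{n-1}$ such that $r_0$ is a $k$-rounding of $w$, $r_j$ is a $k$-rounding of $\sigma(r_{j-1})$ for $1\le j\le n-1$, and $\sigma(r_{n-1})=\epsilon$. The map $f_\sigma:\mathbb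 I\to\mathbb I$ is defined by $f_\sigma(x)=0.\sigma(\widetilde x)$ if $x\in(0,1]$ and $\widetilde x\neq w_\epsilon^\infty$, and $f_\sigma(x)=0$ otherwise. Optimality condition: every $w\in\{0,1\}^\omega$ can be written as $w=\prod_{i\ge1}\sigma(b_i)$ with blocks $b_i\in\{0,1\}^k$ satisfying $\sigma(b_i)\ne\epsilon$. *)

theory Defs
  imports "HOL-Analysis.Analysis"
begin

text \<open>Finite binary words are bool lists (True = 1), infinite binary words are
  functions nat \<Rightarrow> bool (position 0 is the first letter). Block substitutions are
  maps on bool lists; only their values on lists of length k matter.\<close>

definition bit :: "bool \<Rightarrow> real" where
  "bit b = (if b then 1 else 0)"

definition val_fin :: "bool list \<Rightarrow> real" where
  "val_fin w = (\<Sum>i<length w. bit (w ! i) / 2 ^ (i + 1))"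

definition val_inf :: "(nat \<Rightarrow> bool) \<Rightarrow> real" where
  "val_inf s = (\<Sum>i. bit (s i) / 2 ^ (i + 1))"

definition app_inf :: "bool list \<Rightarrow> (nat \<Rightarrow> bool) \<Rightarrow> (nat \<Rightarrow> bool)" where
  "app_inf w v = (\<lambda>n. if n < length w then w ! n else v (n - length w))"

definition tilde :: "real \<Rightarrow> (nat \<Rightarrow> bool)" where
  "tilde x = (THE s. (\<forall>n. \<exists>m\<ge>n. s m) \<and> val_inf s = x)"

definition cyl :: "bool list \<Rightarrow> real set" where
  "cyl w = {val_fin (w @ v) | v. True} \<union> {val_inf (app_inf w v) | v. True}"

definition block :: "nat \<Rightarrow> (nat \<Rightarrow> bool) \<Rightarrow> nat \<Rightarrow> bool list" where
  "block k s i = map s [i * k..<(i + 1) * k]"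

definition chunks :: "nat \<Rightarrow> bool list \<Rightarrow> bool list list" where
  "chunks k w = map (\<lambda>i. take k (drop (i * k) w)) [0..<length w div k]"

definition subst_fin :: "nat \<Rightarrow> (bool list \<Rightarrow> bool list) \<Rightarrow> bool list \<Rightarrow> bool list" where
  "subst_fin k \<sigma> w = concat (map \<sigma> (chunks k w))"

definition erasing_subst :: "nat \<Rightarrow> (bool list \<Rightarrow> bool list) \<Rightarrow> bool" where
  "erasing_subst k \<sigma> \<longleftrightarrow> (\<exists>!b. length b = k \<and> \<sigma> b = [])"

definition w_eps :: "nat \<Rightarrow> (bool list \<Rightarrow> bool list) \<Rightarrow> bool list" where
  "w_eps k \<sigma> = (THE b. length b = k \<and> \<sigma> b = [])"

definition is_rounding :: "nat \<Rightarrow> bool list \<Rightarrow> bool list \<Rightarrow> bool" where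
  "is_rounding k w r \<longleftrightarrow> (\<exists>v. r = w @ v) \<and> length r mod k = 0 \<and>
     (\<forall>m. m mod k = 0 \<and> length w \<le> m \<longrightarrow> length r \<le> m)"

definition strongly_erasing :: "nat \<Rightarrow> (bool list \<Rightarrow> bool list) \<Rightarrow> bool" where
  "strongly_erasing k \<sigma> \<longleftrightarrow> (\<forall>w. \<exists>n \<ge> 1. \<exists>r :: nat \<Rightarrow> bool list.
      is_rounding k w (r 0) \<and>
      (\<forall>j. 1 \<le> j \<and> j \<le> n - 1 \<longrightarrow> is_rounding k (subst_fin k \<sigma> (r (j - 1))) (r j)) \<and>
      subst_fin k \<sigma> (r (n - 1)) = [])"

text \<open>0.(ws 0 ws 1 ws 2 ...) for the (finite or infinite) concatenation of finite words\<close>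
definition val_concat :: "(nat \<Rightarrow> bool list) \<Rightarrow> real" where
  "val_concat ws = (\<Sum>i. val_fin (ws i) / 2 ^ (\<Sum>j<i. length (ws j)))"

definition f_sigma :: "nat \<Rightarrow> (bool list \<Rightarrow> bool list) \<Rightarrow> real \<Rightarrow> real" where
  "f_sigma k \<sigma> x = (if 0 < x \<and> x \<le> 1 \<and> \<not> (\<forall>i. block k (tilde x) i = w_eps k \<sigma>)
      then val_concat (\<lambda>i. \<sigma> (block k (tilde x) i)) else 0)"

definition optimal :: "nat \<Rightarrow> (bool list \<Rightarrow> bool list) \<Rightarrow> bool" where
  "optimal k \<sigma> \<longleftrightarrow> (\<forall>s :: nat \<Rightarrow> bool. \<exists>b :: nat \<Rightarrow> bool list.
      (\<forall>i. length (b i) = k \<and> \<sigma> (b i) \<noteq> []) \<and>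
      (\<forall>n. map s [0..<(\<Sum>j<n. length (\<sigma> (b j)))] = concat (map (\<sigma> \<circ> b) [0..<n])))"

end

theory Submission
  imports Defs
begin

text \<open>If the length of r is a multiple of k, every point 0.\<sigma>(r)t of the cylinder [\<sigma>(r)] has a
  preimage in [r]: by optimality t = \<sigma>(b0)\<sigma>(b1)... with non-erased blocks bi, and f_sigma maps
  the point with expansion r b0 w_eps b1 w_eps ... to it. Following the chain of k-roundings
  given by strong erasure, the h-th iterate of [w] contains f_sigma([r]), which contains
  [\<sigma>(r)] = [\<epsilon>] = [0,1] for the last word r of the chain. Mixing follows because every
  nonempty open set contains a cylinder and f_sigma maps [0,1] onto itself.\<close>

lemma summable_digits: "summable (\<lambda>i. bit (s i) / 2 ^ (i + 1) :: real)"
proof (rule summable_comparison_test[where g="\<lambda>i. (1/2::real) ^ Suc i"])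
  show "summable (\<lambda>i. (1/2::real) ^ Suc i)" using power_half_series summable_def by blast
qed (auto simp: bit_def power_divide)

lemma val_inf_sums: "(\<lambda>i. bit (s i) / 2 ^ (i + 1)) sums val_inf s"
  unfolding val_inf_def using summable_digits summable_sums by blast

lemma val_inf_nonneg: "0 \<le> val_inf s"
  unfolding val_inf_def by (rule suminf_nonneg[OF summable_digits]) (simp add: bit_def)

lemma val_inf_le_1: "val_inf s \<le> 1"
proof -
  have "val_inf s \<le> (\<Sum>i. (1/2::real) ^ Suc i)"
    unfolding val_inf_def
    by (rule suminf_le) (use power_half_series summable_def summable_digits in
        \<open>auto simp: bit_def power_divide\<close>)
  also have "\<dots> = 1" using power_half_series sums_unique by metis
  finally show ?thesis .
qed

lemma val_inf_pos: assumes "s m" shows "0 < val_inf s"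
proof -
  have "(\<Sum>i\<in>{m}. bit (s i) / 2 ^ (i + 1)) \<le> val_inf s"
    unfolding val_inf_def by (rule sum_le_suminf[OF summable_digits]) (auto simp: bit_def)
  moreover have "0 < bit (s m) / 2 ^ (m + 1)" using assms by (simp add: bit_def)
  ultimately show ?thesis by simp
qed

lemma val_inf_app_inf: "val_inf (app_inf w v) = val_fin w + val_inf v / 2 ^ length w"
proof -
  let ?f = "\<lambda>i. bit (app_inf w v i) / 2 ^ (i + 1) :: real"
  have "val_inf (app_inf w v) = (\<Sum>i. ?f (i + length w)) + (\<Sum>i<length w. ?f i)"
    unfolding val_inf_def by (rule suminf_split_initial_segment[OF summable_digits])
  moreover have "(\<Sum>i<length w. ?f i) = val_fin w"
    unfolding val_fin_def app_inf_def by (rule sum.cong) auto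
  moreover have "(\<Sum>i. ?f (i + length w)) = (\<Sum>i. bit (v i) / 2 ^ (i + 1) / 2 ^ length w)"
    by (rule arg_cong[where f=suminf]) (auto simp: app_inf_def power_add)
  moreover have "\<dots> = val_inf v / 2 ^ length w"
    unfolding val_inf_def by (rule suminf_divide[OF summable_digits])
  ultimately show ?thesis by simp
qed

lemma val_inf_const_False: "val_inf (\<lambda>_. False) = 0"
  by (simp add: val_inf_def bit_def)

lemma val_fin_eq_val_inf: "val_fin w = val_inf (app_inf w (\<lambda>_. False))"
  by (simp add: val_inf_app_inf val_inf_const_False)

lemma val_fin_bounds: "0 \<le> val_fin w" "val_fin w \<le> 1"
  using val_inf_nonneg val_inf_le_1 by (simp_all add: val_fin_eq_val_inf)

lemma app_inf_append: "app_inf (u @ v) t = app_inf u (app_inf v t)"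
  by (auto simp: app_inf_def nth_append)

lemma val_fin_append: "val_fin (u @ v) = val_fin u + val_fin v / 2 ^ length u"
  by (metis app_inf_append val_fin_eq_val_inf val_inf_app_inf)

lemma app_inf_prefix_shift: "app_inf (map s [0..<p]) (\<lambda>m. s (m + p)) = s"
  by (auto simp: app_inf_def)

lemma map_app_inf_upt: "map (app_inf u t) [0..<length u + n] = u @ map t [0..<n]"
  by (rule nth_equalityI) (auto simp: app_inf_def nth_append)

lemma val_inf_split: "val_inf s = val_fin (map s [0..<p]) + val_inf (\<lambda>m. s (m + p)) / 2 ^ p"
  using val_inf_app_inf[of "map s [0..<p]" "\<lambda>m. s (m + p)"] by (simp add: app_inf_prefix_shift)

lemma val_inf_first_digit: "val_inf s = bit (s 0) / 2 + val_inf (\<lambda>m. s (Suc m)) / 2"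
  using val_inf_split[of s 1] by (simp add: val_fin_def)

lemma val_inf_differ_at_first_mismatch:
  assumes inf: "\<forall>n. \<exists>m\<ge>n. s m"
    and prefix: "map s [0..<p] = map s' [0..<p]" and "s p" "\<not> s' p"
  shows "val_inf s \<noteq> val_inf s'"
proof
  assume eq: "val_inf s = val_inf s'"
  have tails: "val_inf (\<lambda>m. s (m + p)) = val_inf (\<lambda>m. s' (m + p))"
    using val_inf_split[of s p] val_inf_split[of s' p] eq prefix by simp
  obtain m where m: "m \<ge> Suc p" "s m" using inf by blast
  have "0 < val_inf (\<lambda>i. s (Suc i + p))"
    by (rule val_inf_pos[of _ "m - Suc p"]) (use m in auto)
  moreover have "val_inf (\<lambda>i. s' (Suc i + p)) \<le> 1" by (rule val_inf_le_1)
  ultimately show False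
    using tails val_inf_first_digit[of "\<lambda>m. s (m + p)"] val_inf_first_digit[of "\<lambda>m. s' (m + p)"]
      \<open>s p\<close> \<open>\<not> s' p\<close>
    by (simp add: bit_def)
qed

lemma val_inf_inj:
  assumes "\<forall>n. \<exists>m\<ge>n. s m" "\<forall>n. \<exists>m\<ge>n. s' m" "val_inf s = val_inf s'"
  shows "s = s'"
proof (rule ccontr)
  assume "s \<noteq> s'"
  define p where "p = (LEAST p. s p \<noteq> s' p)"
  have "s p \<noteq> s' p" unfolding p_def by (rule LeastI_ex) (use \<open>s \<noteq> s'\<close> in blast)
  moreover have "map s [0..<p] = map s' [0..<p]"
  proof (rule map_cong[OF refl])
    fix i assume "i \<in> set [0..<p]"
    then show "s i = s' i" using not_less_Least[of i "\<lambda>p. s p \<noteq> s' p"] p_def by auto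
  qed
  ultimately show False
    using val_inf_differ_at_first_mismatch[of s p s'] val_inf_differ_at_first_mismatch[of s' p s]
      assms by (cases "s p") auto
qed

lemma tilde_val_inf:
  assumes "\<forall>n. \<exists>m\<ge>n. s m" shows "tilde (val_inf s) = s"
  unfolding tilde_def
proof (rule the_equality)
  fix s' assume "(\<forall>n. \<exists>m\<ge>n. s' m) \<and> val_inf s' = val_inf s"
  then show "s' = s" using val_inf_inj assms by blast
qed (use assms in simp)

lemma val_inf_surj:
  assumes "y \<in> {0..1::real}" shows "\<exists>t. val_inf t = y"
proof (cases "y = 0")
  case True then show ?thesis using val_inf_const_False by blast
next
  case False
  then have y: "0 < y" "y \<le> 1" using assms by auto
  define c where "c n = \<lceil>y * 2 ^ n\<rceil> - 1" for n
  define t where "t n = (c (Suc n) \<noteq> 2 * c n)" for n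
  have c0: "c 0 = 0" unfolding c_def using y by (simp add: ceiling_unique)
  have bounds: "y * 2 ^ n - 1 \<le> c n" "c n < y * 2 ^ n" for n
    unfolding c_def by linarith+
  have step: "c (Suc n) = 2 * c n \<or> c (Suc n) = 2 * c n + 1" for n
    using bounds[of n] bounds[of "Suc n"] by auto
  have digit: "bit (t n) = c (Suc n) - 2 * c n" for n
    using step[of n] by (auto simp: t_def bit_def)
  have partial: "(\<Sum>i<n. bit (t i) / 2 ^ (i + 1)) = c n / 2 ^ n" for n
    by (induction n) (simp_all add: c0 digit field_simps)
  have approx: "y - (1/2) ^ n \<le> c n / 2 ^ n" "c n / 2 ^ n \<le> y" for n
    using divide_right_mono[OF bounds(1)[of n], of "2 ^ n"] bounds(2)[of n]
    by (simp_all add: diff_divide_distrib power_one_over pos_divide_le_eq)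
  have "(\<lambda>n. c n / 2 ^ n :: real) \<longlonglongrightarrow> y"
  proof (rule real_tendsto_sandwich[of "\<lambda>n. y - (1/2) ^ n" _ _ "\<lambda>n. y"])
    show "(\<lambda>n. y - (1/2) ^ n) \<longlonglongrightarrow> y"
      using tendsto_diff[OF tendsto_const LIMSEQ_realpow_zero[of "1/2::real"]] by simp
  qed (use approx in auto)
  then have "(\<lambda>i. bit (t i) / 2 ^ (i + 1)) sums y" unfolding sums_def partial .
  then show ?thesis using val_inf_sums sums_unique2 by blast
qed

lemma cyl_eq_range: "cyl w = range (\<lambda>t. val_inf (app_inf w t))"
proof -
  have "val_fin (w @ v) \<in> range (\<lambda>t. val_inf (app_inf w t))" for v
    by (metis app_inf_append rangeI val_fin_eq_val_inf)
  then show ?thesis unfolding cyl_def by blast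
qed

lemma cyl_append_subset: "cyl (u @ v) \<subseteq> cyl u"
  by (auto simp: cyl_eq_range app_inf_append)

lemma cyl_subset_unit: "cyl w \<subseteq> {0..1}"
  using val_inf_nonneg val_inf_le_1 by (auto simp: cyl_eq_range)

lemma cyl_Nil: "cyl [] = {0..1}"
proof
  show "{0..1} \<subseteq> cyl []"
  proof
    fix y assume "y \<in> {0..1::real}"
    then obtain t where "val_inf t = y" using val_inf_surj by blast
    moreover have "app_inf [] t = t" by (simp add: app_inf_def)
    ultimately show "y \<in> cyl []" unfolding cyl_eq_range by (metis rangeI)
  qed
qed (rule cyl_subset_unit)

lemma dist_cyl_le:
  assumes "x \<in> cyl w" "y \<in> cyl w" shows "dist x y \<le> 1 / 2 ^ length w"
proof -
  obtain u v where "x = val_fin w + val_inf u / 2 ^ length w" "y = val_fin w + val_inf v / 2 ^ length w"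
    using assms by (auto simp: cyl_eq_range val_inf_app_inf)
  moreover have "\<bar>val_inf u - val_inf v\<bar> \<le> 1"
    using val_inf_nonneg[of u] val_inf_le_1[of u] val_inf_nonneg[of v] val_inf_le_1[of v] by linarith
  ultimately show ?thesis
    by (simp add: dist_real_def diff_divide_distrib[symmetric] divide_right_mono)
qed

lemma openin_contains_cyl:
  assumes A: "openin (top_of_set {0..1::real}) A" and x: "x \<in> A" shows "\<exists>w. cyl w \<subseteq> A"
proof -
  obtain e where e: "e > 0" "\<And>y. y \<in> {0..1} \<Longrightarrow> dist y x < e \<Longrightarrow> y \<in> A"
    using A x unfolding openin_euclidean_subtopology_iff by metis
  have "x \<in> {0..1}" using openin_imp_subset[OF A] x by blast
  then obtain t where t: "val_inf t = x" using val_inf_surj by blast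
  obtain N where N: "(1/2::real) ^ N < e" using real_arch_pow_inv[of e "1/2"] e(1) by auto
  have "x = val_inf (app_inf (map t [0..<N]) (\<lambda>m. t (m + N)))"
    by (simp add: app_inf_prefix_shift t)
  then have x_cyl: "x \<in> cyl (map t [0..<N])" unfolding cyl_eq_range by blast
  have "cyl (map t [0..<N]) \<subseteq> A"
  proof
    fix y assume y: "y \<in> cyl (map t [0..<N])"
    have "dist y x < e" using dist_cyl_le[OF y x_cyl] N by (simp add: power_one_over)
    then show "y \<in> A" using e(2) y cyl_subset_unit by blast
  qed
  then show ?thesis by blast
qed

lemma length_concat_map_upt: "length (concat (map ws [0..<n])) = (\<Sum>j<n. length (ws j))"
  by (induction n) auto

lemma concat_map_upt_prefix:
  assumes "m \<le> n" shows "\<exists>R. concat (map ws [0..<n]) = concat (map ws [0..<m]) @ R"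
proof -
  have "[0..<n] = [0..<m] @ [m..<n]" using assms upt_add_eq_append[of 0 m "n - m"] by simp
  then show ?thesis by simp
qed

lemma val_concat_partial_sum:
  "(\<Sum>i<n. val_fin (ws i) / 2 ^ (\<Sum>j<i. length (ws j))) = val_fin (concat (map ws [0..<n]))"
proof (induction n)
  case 0 then show ?case by (simp add: val_fin_def)
next
  case (Suc n) then show ?case by (simp add: val_fin_append length_concat_map_upt)
qed

lemma val_concat_bounds: "0 \<le> val_concat ws" "val_concat ws \<le> 1"
proof -
  let ?a = "\<lambda>i. val_fin (ws i) / 2 ^ (\<Sum>j<i. length (ws j))"
  have nonneg: "\<And>i. 0 \<le> ?a i" using val_fin_bounds by simp
  have partial_le: "(\<Sum>i<n. ?a i) \<le> 1" for n
    unfolding val_concat_partial_sum using val_fin_bounds by simp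
  have "summable ?a"
  proof (rule bounded_imp_summable[where B=1])
    show "(\<Sum>i\<le>n. ?a i) \<le> 1" for n using partial_le[of "Suc n"] by (simp add: lessThan_Suc_atMost)
  qed (rule nonneg)
  then show "0 \<le> val_concat ws" "val_concat ws \<le> 1"
    unfolding val_concat_def using suminf_nonneg nonneg suminf_le_const partial_le by blast+
qed

lemma val_concat_eq_val_inf:
  assumes cofinal: "\<And>M. \<exists>n\<ge>M. M \<le> length (concat (map ws [0..<n])) \<and>
      map s [0..<length (concat (map ws [0..<n]))] = concat (map ws [0..<n])"
  shows "val_concat ws = val_inf s"
proof -
  let ?P = "\<lambda>n. concat (map ws [0..<n])"
  let ?L = "\<lambda>n. length (?P n)"
  have prefix: "map s [0..<?L n] = ?P n" for n
  proof -
    obtain n' where "n \<le> n'" and n': "map s [0..<?L n'] = ?P n'" using cofinal by blast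
    then obtain R where R: "?P n' = ?P n @ R" using concat_map_upt_prefix by blast
    have "map s [0..<?L n] = take (?L n) (map s [0..<?L n'])" by (simp add: take_map R)
    then show ?thesis using n' R by simp
  qed
  have "mono ?L"
    by (rule monoI) (metis concat_map_upt_prefix length_append le_add1)
  moreover have "\<exists>n. Z \<le> ?L n" for Z using cofinal by blast
  ultimately have "filterlim ?L at_top sequentially"
    unfolding filterlim_at_top eventually_sequentially by (meson le_trans monoD)
  then have "(\<lambda>n. \<Sum>i<?L n. bit (s i) / 2 ^ (i + 1)) \<longlonglongrightarrow> val_inf s"
    using filterlim_compose[OF val_inf_sums[unfolded sums_def]] by blast
  moreover have "(\<Sum>i<?L n. bit (s i) / 2 ^ (i + 1)) = (\<Sum>i<n. val_fin (ws i) / 2 ^ (\<Sum>j<i. length (ws j)))"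
    for n
  proof -
    have "(\<Sum>i<?L n. bit (s i) / 2 ^ (i + 1)) = val_fin (map s [0..<?L n])" by (simp add: val_fin_def)
    then show ?thesis by (simp add: prefix val_concat_partial_sum)
  qed
  ultimately have "(\<lambda>i. val_fin (ws i) / 2 ^ (\<Sum>j<i. length (ws j))) sums val_inf s"
    unfolding sums_def by simp
  then show ?thesis unfolding val_concat_def by (rule sums_unique[symmetric])
qed

definition blocks_word :: "nat \<Rightarrow> (nat \<Rightarrow> bool list) \<Rightarrow> nat \<Rightarrow> bool" where
  "blocks_word k d n = d (n div k) ! (n mod k)"

lemma blocks_word_block_index:
  "j < k \<Longrightarrow> blocks_word k d (i * k + j) = d i ! j"
  by (simp add: blocks_word_def)

lemma block_blocks_word:
  assumes "\<And>i. length (d i) = k" shows "block k (blocks_word k d) i = d i"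
proof (rule nth_equalityI)
  fix j assume "j < length (block k (blocks_word k d) i)"
  then have "j < k" by (simp add: block_def)
  then show "block k (blocks_word k d) i ! j = d i ! j"
    by (simp add: block_def blocks_word_block_index add.commute[of j])
qed (simp add: block_def assms)

lemma blocks_word_frequently_True:
  assumes "0 < k" "\<And>i. length (d i) = k" "\<And>i. \<exists>j\<ge>i. True \<in> set (d j)"
  shows "\<forall>n. \<exists>m\<ge>n. blocks_word k d m"
proof
  fix n
  obtain j where "j \<ge> n" "True \<in> set (d j)" using assms(3) by blast
  then obtain p where p: "p < k" "d j ! p" using assms(2) by (metis in_set_conv_nth)
  have "j \<le> j * k" using \<open>0 < k\<close> by (cases k) auto
  then have "n \<le> j * k + p" using \<open>j \<ge> n\<close> by linarith
  then show "\<exists>m\<ge>n. blocks_word k d m" using p blocks_word_block_index by blast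
qed

lemma app_inf_frequently_True:
  assumes "\<forall>n. \<exists>m\<ge>n. s m" shows "\<forall>n. \<exists>m\<ge>n. app_inf w s m"
proof
  fix n obtain m where "m \<ge> n" "s m" using assms by blast
  then have "m + length w \<ge> n" "app_inf w s (m + length w)" by (simp_all add: app_inf_def)
  then show "\<exists>m\<ge>n. app_inf w s m" by blast
qed

lemma block_app_inf:
  assumes "length r = q * k" shows "block k (app_inf r s) (q + i) = block k s i"
proof (rule nth_equalityI)
  fix j assume "j < length (block k (app_inf r s) (q + i))"
  then have "j < k" by (simp add: block_def)
  then show "block k (app_inf r s) (q + i) ! j = block k s i ! j"
    using assms by (simp add: block_def app_inf_def algebra_simps)
qed (simp add: block_def)

lemma chunks_map_upt:
  assumes "0 < k" shows "chunks k (map s [0..<q * k]) = map (block k s) [0..<q]"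
proof -
  have "take k (drop (i * k) (map s [0..<q * k])) = map s [i * k..<(i + 1) * k]" if "i < q" for i
  proof -
    have "(i + 1) * k \<le> q * k" using that by (intro mult_le_mono1) simp
    then show ?thesis by (simp add: take_map drop_map take_upt algebra_simps)
  qed
  then show ?thesis using assms by (simp add: chunks_def block_def)
qed

lemma subst_fin_map_upt:
  "0 < k \<Longrightarrow> subst_fin k \<sigma> (map s [0..<q * k]) = concat (map (\<lambda>i. \<sigma> (block k s i)) [0..<q])"
  by (simp add: subst_fin_def chunks_map_upt comp_def)

lemma erasing_subst_w_eps:
  assumes "erasing_subst k \<sigma>" shows "length (w_eps k \<sigma>) = k" "\<sigma> (w_eps k \<sigma>) = []"
  using theI'[OF assms[unfolded erasing_subst_def]] by (simp_all add: w_eps_def)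

lemma f_sigma_bounds: "f_sigma k \<sigma> x \<in> {0..1}"
  using val_concat_bounds by (simp add: f_sigma_def)

lemma f_sigma_val_inf:
  assumes "\<forall>n. \<exists>m\<ge>n. s m" and "block k s i \<noteq> w_eps k \<sigma>"
  shows "f_sigma k \<sigma> (val_inf s) = val_concat (\<lambda>i. \<sigma> (block k s i))"
  using assms val_inf_pos val_inf_le_1 by (auto simp: f_sigma_def tilde_val_inf)

definition interleave :: "(nat \<Rightarrow> 'a) \<Rightarrow> 'a \<Rightarrow> nat \<Rightarrow> 'a" where
  "interleave b c i = (if even i then b (i div 2) else c)"

lemma concat_map_interleave:
  "\<sigma> c = [] \<Longrightarrow> concat (map (\<sigma> \<circ> interleave b c) [0..<2 * M]) = concat (map (\<sigma> \<circ> b) [0..<M])"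
  by (induction M) (simp_all add: interleave_def)

lemma interleave_frequently_True:
  assumes "\<And>i. length (b i) = length c" "\<And>i. b i \<noteq> c"
  shows "\<exists>j\<ge>i. True \<in> set (interleave b c j)"
proof (cases "True \<in> set c")
  case True then show ?thesis by (intro exI[of _ "2 * i + 1"]) (simp add: interleave_def)
next
  case False
  then have "True \<in> set (b i)"
    using assms[of i] by (metis (full_types) replicate_length_same)
  then show ?thesis by (intro exI[of _ "2 * i"]) (simp add: interleave_def)
qed

lemma cyl_subst_fin_subset_image:
  assumes "0 < k" "erasing_subst k \<sigma>" "optimal k \<sigma>" "length r mod k = 0"
  shows "cyl (subst_fin k \<sigma> r) \<subseteq> f_sigma k \<sigma> ` cyl r"
proof
  fix y assume "y \<in> cyl (subst_fin k \<sigma> r)"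
  then obtain t where y: "y = val_inf (app_inf (subst_fin k \<sigma> r) t)" by (auto simp: cyl_eq_range)
  obtain b where b: "\<And>i. length (b i) = k" "\<And>i. \<sigma> (b i) \<noteq> []"
    and bt: "\<And>n. map t [0..<(\<Sum>j<n. length (\<sigma> (b j)))] = concat (map (\<sigma> \<circ> b) [0..<n])"
    using assms(3) unfolding optimal_def by metis
  define we where "we = w_eps k \<sigma>"
  have we: "length we = k" "\<sigma> we = []" using erasing_subst_w_eps[OF assms(2)] by (simp_all add: we_def)
  \<comment> \<open>The erased blocks between the b i do not change the image, but force
    infinitely many 1s, so that z is the expansion that f_sigma reads off val_inf z.\<close>
  define e where "e = interleave b we"
  define z where "z = app_inf r (blocks_word k e)"
  obtain q where q: "length r = q * k" using assms(4) by (metis mod_eq_0_iff_dvd dvdE mult.commute)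
  have e_len: "length (e i) = k" for i using b we by (simp add: e_def interleave_def)
  have block_z: "block k z (q + i) = e i" for i
    unfolding z_def using block_app_inf[OF q] block_blocks_word[OF e_len] by simp
  have "map z [0..<q * k] = r" unfolding z_def using map_app_inf_upt[of r _ 0] q by simp
  then have subst_r: "subst_fin k \<sigma> r = concat (map (\<lambda>i. \<sigma> (block k z i)) [0..<q])"
    using subst_fin_map_upt[OF assms(1)] by metis
  have images: "concat (map (\<lambda>i. \<sigma> (block k z i)) [0..<q + 2 * M]) =
      subst_fin k \<sigma> r @ map t [0..<(\<Sum>j<M. length (\<sigma> (b j)))]" for M
  proof -
    have "[0..<q + 2 * M] = [0..<q] @ map (\<lambda>i. i + q) [0..<2 * M]"
      by (simp add: map_add_upt upt_add_eq_append[of 0 q] add.commute)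
    then show ?thesis
      using concat_map_interleave[of \<sigma> we b M, OF we(2)]
      by (simp add: subst_r block_z add.commute[of _ q] comp_def bt e_def)
  qed
  have frequently_True: "\<forall>n. \<exists>m\<ge>n. z m" unfolding z_def
    using interleave_frequently_True[of b we] b we
    by (intro app_inf_frequently_True blocks_word_frequently_True[OF assms(1) e_len])
      (metis e_def)
  have "block k z q \<noteq> we" using block_z[of 0] b(2) we(2) by (auto simp: e_def interleave_def)
  then have "f_sigma k \<sigma> (val_inf z) = val_concat (\<lambda>i. \<sigma> (block k z i))"
    unfolding we_def by (rule f_sigma_val_inf[OF frequently_True])
  also have "\<dots> = y"
    unfolding y
  proof (rule val_concat_eq_val_inf)
    fix M
    let ?L = "\<Sum>j<M. length (\<sigma> (b j))"
    have "M \<le> ?L" using sum_mono[of "{..<M}" "\<lambda>_. 1::nat"] b(2) by (simp add: Suc_le_eq)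
    then show "\<exists>n\<ge>M. M \<le> length (concat (map (\<lambda>i. \<sigma> (block k z i)) [0..<n])) \<and>
        map (app_inf (subst_fin k \<sigma> r) t) [0..<length (concat (map (\<lambda>i. \<sigma> (block k z i)) [0..<n]))] =
        concat (map (\<lambda>i. \<sigma> (block k z i)) [0..<n])"
      by (intro exI[of _ "q + 2 * M"]) (simp add: images map_app_inf_upt)
  qed
  finally show "y \<in> f_sigma k \<sigma> ` cyl r"
    unfolding z_def cyl_eq_range by blast
qed

lemma f_sigma_image_unit:
  assumes "0 < k" "erasing_subst k \<sigma>" "optimal k \<sigma>"
  shows "f_sigma k \<sigma> ` {0..1} = {0..1}"
  using cyl_subst_fin_subset_image[OF assms, of "[]"] f_sigma_bounds
  by (auto simp: cyl_Nil subst_fin_def chunks_def)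

lemma cyl_rounding_subset: "is_rounding k w r \<Longrightarrow> cyl r \<subseteq> cyl w"
  unfolding is_rounding_def using cyl_append_subset by blast

lemma funpow_f_sigma_image_cyl:
  assumes "0 < k" "erasing_subst k \<sigma>" "optimal k \<sigma>" "strongly_erasing k \<sigma>"
  shows "\<exists>h. (f_sigma k \<sigma> ^^ h) ` cyl w = {0..1}"
proof -
  let ?f = "f_sigma k \<sigma>"
  obtain n :: nat and r :: "nat \<Rightarrow> bool list" where n: "n \<ge> 1" and r0: "is_rounding k w (r 0)"
    and rj: "\<forall>j. 1 \<le> j \<and> j \<le> n - 1 \<longrightarrow> is_rounding k (subst_fin k \<sigma> (r (j - 1))) (r j)"
    and rn: "subst_fin k \<sigma> (r (n - 1)) = []"
    using assms(4) unfolding strongly_erasing_def by blast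
  have image: "cyl (subst_fin k \<sigma> (r j)) \<subseteq> ?f ` cyl (r j)" if "j \<le> n - 1" for j
  proof (rule cyl_subst_fin_subset_image[OF assms(1-3)])
    show "length (r j) mod k = 0"
      using that r0 rj by (cases j) (auto simp: is_rounding_def)
  qed
  have chain: "cyl (r j) \<subseteq> (?f ^^ j) ` cyl w" if "j \<le> n - 1" for j
    using that
  proof (induction j)
    case 0 then show ?case using cyl_rounding_subset[OF r0] by simp
  next
    case (Suc j)
    have "cyl (r (Suc j)) \<subseteq> cyl (subst_fin k \<sigma> (r j))"
      using cyl_rounding_subset rj[rule_format, of "Suc j"] Suc.prems by simp
    also have "\<dots> \<subseteq> ?f ` cyl (r j)" using image Suc.prems by simp
    also have "\<dots> \<subseteq> ?f ` (?f ^^ j) ` cyl w" using Suc by (intro image_mono) simp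
    finally show ?case by (simp add: image_comp)
  qed
  have "{0..1} \<subseteq> ?f ` cyl (r (n - 1))" using image[of "n - 1"] rn by (simp add: cyl_Nil)
  also have "\<dots> \<subseteq> ?f ` (?f ^^ (n - 1)) ` cyl w" using chain by (intro image_mono) simp
  also have "\<dots> = (?f ^^ n) ` cyl w" using n by (cases n) (simp_all add: image_comp)
  finally have "{0..1} \<subseteq> (?f ^^ n) ` cyl w" .
  moreover have "(?f ^^ n) ` cyl w \<subseteq> {0..1}"
    using n f_sigma_bounds by (cases n) auto
  ultimately show ?thesis by blast
qed

lemma funpow_image_eq_self:
  assumes "f ` S = S" shows "(f ^^ n) ` S = S"
proof (induction n)
  case (Suc n)
  have "(f ^^ Suc n) ` S = f ` (f ^^ n) ` S" by (simp add: image_comp)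
  then show ?case using Suc assms by simp
qed simp

lemma topologically_mixing_if_cylinders_onto:
  fixes f :: "real \<Rightarrow> real"
  assumes onto: "f ` {0..1} = {0..1}" and cyl_onto: "\<And>w. \<exists>h. (f ^^ h) ` cyl w = {0..1}"
    and A: "openin (top_of_set {0..1}) A" "A \<noteq> {}"
    and B: "openin (top_of_set {0..1}) B" "B \<noteq> {}"
  shows "\<exists>N. \<forall>n\<ge>N. (f ^^ n) ` A \<inter> B \<noteq> {}"
proof -
  obtain w where w: "cyl w \<subseteq> A" using openin_contains_cyl A by blast
  obtain h where h: "(f ^^ h) ` cyl w = {0..1}" using cyl_onto by blast
  have "{0..1} \<subseteq> (f ^^ n) ` A" if "n \<ge> h" for n
  proof -
    have "(f ^^ n) ` cyl w = (f ^^ (n - h)) ` (f ^^ h) ` cyl w"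
      using that by (simp add: image_comp funpow_add[symmetric])
    then show ?thesis using h funpow_image_eq_self[OF onto] w by (metis image_mono)
  qed
  moreover have "B \<subseteq> {0..1}" using openin_imp_subset[OF B(1)] by simp
  ultimately show ?thesis using B(2) by blast
qed

theorem mainTheorem16:
  fixes k :: nat and \<sigma> :: "bool list \<Rightarrow> bool list"
  assumes "k \<ge> 2"
    and "erasing_subst k \<sigma>"
    and "strongly_erasing k \<sigma>"
    and "w_eps k \<sigma> \<noteq> replicate k True"
    and "optimal k \<sigma>"
  shows "(\<forall>w. \<exists>h. (f_sigma k \<sigma> ^^ h) ` cyl w = {0..1}) \<and>
         (\<forall>A B. openin (top_of_set {0..1::real}) A \<and> openin (top_of_set {0..1}) B \<and>
                A \<noteq> {} \<and> B \<noteq> {} \<longrightarrow>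
                (\<exists>N. \<forall>n\<ge>N. (f_sigma k \<sigma> ^^ n) ` A \<inter> B \<noteq> {}))"
proof -
  have k: "0 < k" using assms(1) by simp
  have cyl_onto: "\<exists>h. (f_sigma k \<sigma> ^^ h) ` cyl w = {0..1}" for w
    using funpow_f_sigma_image_cyl[OF k assms(2,5,3)] .
  then show ?thesis
    using topologically_mixing_if_cylinders_onto[OF f_sigma_image_unit[OF k assms(2,5)]] by blast
qed

end
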